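(* Let $q>1$, let $\Pi_n\sim\mathrm{Mallows}(n,q)$, and let $\Pi,\Pi'\sim\mathrm{Mallows}(\mathbb{N},1/q)$ be independent. Let $r_n(i):=n+1-i$ and $m=\lfloor n/2-(\log n)^2\rfloor$. There exists a coupling of $\Pi_n$ with $(\Pi,\Pi')$ such that $$\mathbb{P}\bigl((r_n\circ\Pi_n)(i)=\Pi(i)\ \text{and}\ (\Pi_n\circ r_n)(i)=\Pi'(i)\ \text{for all }1\le i\le m\bigr)=1-o(1)\quad (n\to\infty).$$
   Context: For $q>0$, $\Pi_n\sim\mathrm{Mallows}(n,q)$ means $\mathbb{P}(\Pi_n=\pi)\propto q^{\mathrm{inv}(\pi)}$ over permutations $\pi$ of $[n]=\{1,\dots,n\}$, where $\mathrm{inv}(\pi)$ is the number of pairs $i<j$ with $\pi(i)>\pi(j)$. For $0<p<1$, $\Pi\sim\mathrm{Mallows}(\mathbb{N},p)$ is the random injection $\mathbb{N}\to\mathbb{N}$ constructed as follows: let $Z_1,Z_2,\dots$ be i.i.d. geometric with $\mathbb{P}(Z_i=k)=(1-p)p^{k-1}$, $k\ge1$; set $\Pi(1)=Z_1$ and, for $i>1$, let $\Pi(i)$ be the $Z_i$-th smallest element of $\mathbb{N}\setminus\{\Pi(1),\dots,\Pi(i-1)\}$. *)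

theory Defs
  imports "HOL-Probability.Probability" "HOL-Library.Infinite_Set"
begin

definition inversions :: "nat \<Rightarrow> (nat \<Rightarrow> nat) \<Rightarrow> nat" where
  "inversions n \<sigma> = card {(i, j). 1 \<le> i \<and> i < j \<and> j \<le> n \<and> \<sigma> i > \<sigma> j}"

definition mallows_fin :: "nat \<Rightarrow> real \<Rightarrow> (nat \<Rightarrow> nat) pmf" where
  "mallows_fin n q = embed_pmf (\<lambda>\<sigma>. if \<sigma> permutes {1..n}
      then q ^ inversions n \<sigma> / (\<Sum>\<tau>\<in>{\<tau>. \<tau> permutes {1..n}}. q ^ inversions n \<tau>)
      else 0)"

text \<open>Geometric law on {1,2,...}: P(Z = k) = (1-p) p^(k-1).\<close>
definition geom1 :: "real \<Rightarrow> nat pmf" where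
  "geom1 p = map_pmf Suc (geometric_pmf (1 - p))"

text \<open>Prefix (Pi(1),...,Pi(i)) of the random injection built from Z(1),Z(2),...:
  Pi(i) is the Z(i)-th smallest element of {1,2,...} minus {Pi(1),...,Pi(i-1)}.\<close>
fun mprefix :: "(nat \<Rightarrow> nat) \<Rightarrow> nat \<Rightarrow> nat list" where
  "mprefix Z 0 = []"
| "mprefix Z (Suc i) =
     (let P = mprefix Z i in P @ [enumerate ({1..} - set P) (Z (Suc i) - 1)])"

text \<open>The injection N -> N (domain {1,2,...}; value 0 at 0 by convention).\<close>
definition mallows_inj :: "(nat \<Rightarrow> nat) \<Rightarrow> nat \<Rightarrow> nat" where
  "mallows_inj Z i = (if i = 0 then 0 else last (mprefix Z i))"

definition FunM :: "(nat \<Rightarrow> nat) measure" where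
  "FunM = Pi\<^sub>M UNIV (\<lambda>_. count_space UNIV)"

definition mallows_N :: "real \<Rightarrow> (nat \<Rightarrow> nat) measure" where
  "mallows_N p = distr (Pi\<^sub>M UNIV (\<lambda>_. measure_pmf (geom1 p))) FunM mallows_inj"

definition is_coupling ::
  "nat \<Rightarrow> real \<Rightarrow> ((nat \<Rightarrow> nat) \<times> (nat \<Rightarrow> nat) \<times> (nat \<Rightarrow> nat)) measure \<Rightarrow> bool" where
  "is_coupling n q C \<longleftrightarrow>
     prob_space C \<and> sets C = sets (FunM \<Otimes>\<^sub>M FunM \<Otimes>\<^sub>M FunM) \<and>
     distr C FunM fst = distr (measure_pmf (mallows_fin n q)) FunM (\<lambda>x. x) \<and>
     distr C (FunM \<Otimes>\<^sub>M FunM) snd = mallows_N (1 / q) \<Otimes>\<^sub>M mallows_N (1 / q)"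

definition good_event :: "nat \<Rightarrow> ((nat \<Rightarrow> nat) \<times> (nat \<Rightarrow> nat) \<times> (nat \<Rightarrow> nat)) set" where
  "good_event n = {(\<sigma>, \<pi>, \<pi>'). \<forall>i::nat. 1 \<le> i \<and> int i \<le> \<lfloor>real n / 2 - (ln (real n))^2\<rfloor> \<longrightarrow>
       (n + 1 - \<sigma> i = \<pi> i \<and> \<sigma> (n + 1 - i) = \<pi>' i)}"

end

theory Submission
  imports Defs "HOL-Real_Asymp.Real_Asymp"
begin

text \<open>Encode a permutation \<open>\<sigma>\<close> of \<open>{1..n}\<close> by a mixed Lehmer code: at a position \<open>k \<le> m\<close> the
  number of larger values to its right, at a position \<open>k > m\<close> the number of smaller values at
  positions \<open>m+1..k-1\<close>. The entries range over \<open>{0..<n+1-k}\<close> resp. \<open>{0..<k-m}\<close> and add up to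
  \<open>n choose 2\<close> minus the number of inversions, so under \<open>Mallows(n,q)\<close> they are independent
  geometric variables of ratio \<open>1/q\<close> truncated to their ranges, that is, distributed like
  \<open>(Z - 1) mod N\<close> for a geometric \<open>Z\<close>. Feed into the code the geometric variables \<open>Z 1, ..., Z m\<close>
  that build \<open>\<Pi>\<close> and \<open>Z' 1, ..., Z' (n - m)\<close> that build \<open>\<Pi>'\<close>. If all of them are at most
  \<open>D = \<lfloor>(ln n)^2\<rfloor>\<close>, the reductions do nothing, and decoding the permutation position by position
  is literally the insertion procedure that defines \<open>\<Pi>\<close> (seen through the reflection \<open>r\<^sub>n\<close>) and
  \<open>\<Pi>'\<close>. This fails with probability at most \<open>2 m (1/q)^(D+1)\<close>, which is \<open>o(1)\<close>.\<close>

section \<open>Ranks in enumerations\<close>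

lemma card_less_enumerate:
  fixes S :: "nat set"
  assumes "infinite S"
  shows "card {y\<in>S. y < enumerate S i} = i"
proof -
  have "{y\<in>S. y < enumerate S i} = enumerate S ` {..<i}"
  proof (intro equalityI subsetI)
    fix y assume y: "y \<in> {y\<in>S. y < enumerate S i}"
    then obtain j where "y = enumerate S j" using enumerate_Ex[OF assms] by blast
    with y assms show "y \<in> enumerate S ` {..<i}" by auto
  qed (use assms enumerate_in_set in auto)
  then show ?thesis
    using inj_enumerate[OF assms] by (simp add: card_image inj_on_subset)
qed

lemma enumerate_eqI:
  fixes S :: "nat set"
  assumes "infinite S" "x \<in> S" "card {y\<in>S. y < x} = i"
  shows "enumerate S i = x"
proof -
  obtain j where j: "x = enumerate S j" using enumerate_Ex[OF assms(1,2)] by blast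
  then have "j = i" using assms(3) card_less_enumerate[OF assms(1)] by simp
  with j show ?thesis by simp
qed

lemma enumerate_cong_below:
  fixes S T :: "nat set"
  assumes S: "infinite S" and T: "infinite T" and agree: "S \<inter> {..b} = T \<inter> {..b}"
    and le: "enumerate S i \<le> b"
  shows "enumerate T i = enumerate S i"
proof (rule enumerate_eqI[OF T])
  have "enumerate S i \<in> S \<inter> {..b}" using enumerate_in_set[OF S] le by simp
  then show "enumerate S i \<in> T" unfolding agree by simp
  have "{y\<in>T. y < enumerate S i} = {y\<in>S. y < enumerate S i}"
  proof -
    have "y \<in> T \<longleftrightarrow> y \<in> S" if "y < enumerate S i" for y
      using that le agree by (metis IntD1 IntI atMost_iff less_imp_le order.trans)
    then show ?thesis by blast
  qed
  then show "card {y\<in>T. y < enumerate S i} = i" by (simp add: card_less_enumerate[OF S])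
qed

lemma enumerate_Diff_le:
  fixes F :: "nat set"
  assumes "finite F"
  shows "enumerate ({1..} - F) i \<le> i + card F + 1"
proof -
  let ?S = "{1..} - F"
  have inf: "infinite ?S" using assms by (simp add: infinite_Ici Diff_infinite_finite)
  let ?e = "enumerate ?S i"
  have "{..<?e} \<subseteq> insert 0 (F \<union> {y\<in>?S. y < ?e})" by auto
  then have "card {..<?e} \<le> card (insert 0 (F \<union> {y\<in>?S. y < ?e}))"
    by (intro card_mono) (use assms in auto)
  also have "\<dots> \<le> 1 + card (F \<union> {y\<in>?S. y < ?e})" by (simp add: card_insert_le_m1 card_insert_if)
  also have "\<dots> \<le> 1 + (card F + card {y\<in>?S. y < ?e})" by (simp add: card_Un_le)
  also have "card {y\<in>?S. y < ?e} = i" by (rule card_less_enumerate[OF inf])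
  finally show ?thesis by simp
qed

lemma bij_betw_eq_enumerate:
  fixes \<sigma> :: "nat \<Rightarrow> nat"
  assumes \<sigma>: "bij_betw \<sigma> {1..n} {1..n}" and A: "A \<subseteq> {1..n}" and k: "k \<in> {1..n} - A"
  shows "\<sigma> k = enumerate ({1..} - \<sigma> ` A) (card {j \<in> {1..n} - A. \<sigma> j < \<sigma> k})"
proof (rule sym, rule enumerate_eqI)
  have inj: "inj_on \<sigma> {1..n}" using \<sigma> bij_betw_imp_inj_on by blast
  show "infinite ({1..} - \<sigma> ` A)" by (simp add: infinite_Ici Diff_infinite_finite finite_subset[OF A])
  show "\<sigma> k \<in> {1..} - \<sigma> ` A"
    using k A bij_betwE[OF \<sigma>] inj_on_image_mem_iff[OF inj] by auto
  have "{y \<in> {1..} - \<sigma> ` A. y < \<sigma> k} = \<sigma> ` {j \<in> {1..n} - A. \<sigma> j < \<sigma> k}"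
  proof (intro equalityI subsetI)
    fix y assume y: "y \<in> {y \<in> {1..} - \<sigma> ` A. y < \<sigma> k}"
    then have "y \<in> {1..n}" using k bij_betwE[OF \<sigma>] by fastforce
    then obtain j where "j \<in> {1..n}" "y = \<sigma> j" using bij_betw_imp_surj_on[OF \<sigma>] by blast
    with y show "y \<in> \<sigma> ` {j \<in> {1..n} - A. \<sigma> j < \<sigma> k}" by blast
  next
    fix y assume "y \<in> \<sigma> ` {j \<in> {1..n} - A. \<sigma> j < \<sigma> k}"
    then obtain j where "j \<in> {1..n}" "j \<notin> A" "\<sigma> j < \<sigma> k" "y = \<sigma> j" by auto
    then show "y \<in> {y \<in> {1..} - \<sigma> ` A. y < \<sigma> k}"
      using A bij_betwE[OF \<sigma>] inj_on_image_mem_iff[OF inj] by auto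
  qed
  moreover have "inj_on \<sigma> {j \<in> {1..n} - A. \<sigma> j < \<sigma> k}"
    using inj by (rule inj_on_subset) auto
  ultimately show "card {y \<in> {1..} - \<sigma> ` A. y < \<sigma> k} = card {j \<in> {1..n} - A. \<sigma> j < \<sigma> k}"
    by (simp add: card_image)
qed

section \<open>A mixed Lehmer code\<close>

definition left_code :: "nat \<Rightarrow> (nat \<Rightarrow> nat) \<Rightarrow> nat \<Rightarrow> nat" where
  "left_code n \<sigma> k = card {j \<in> {k<..n}. \<sigma> k < \<sigma> j}"

definition right_code :: "nat \<Rightarrow> (nat \<Rightarrow> nat) \<Rightarrow> nat \<Rightarrow> nat" where
  "right_code m \<sigma> k = card {j \<in> {m<..<k}. \<sigma> j < \<sigma> k}"

definition mixed_code :: "nat \<Rightarrow> nat \<Rightarrow> (nat \<Rightarrow> nat) \<Rightarrow> nat \<Rightarrow> nat" where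
  "mixed_code n m \<sigma> k = (if k \<le> m then left_code n \<sigma> k else right_code m \<sigma> k)"

definition code_bound :: "nat \<Rightarrow> nat \<Rightarrow> nat \<Rightarrow> nat" where
  "code_bound n m k = (if k \<le> m then n + 1 - k else k - m)"

definition mixed_codes :: "nat \<Rightarrow> nat \<Rightarrow> (nat \<Rightarrow> nat) set" where
  "mixed_codes n m = (\<Pi>\<^sub>E k\<in>{1..n}. {..<code_bound n m k})"

definition mixed_code_vec :: "nat \<Rightarrow> nat \<Rightarrow> (nat \<Rightarrow> nat) \<Rightarrow> nat \<Rightarrow> nat" where
  "mixed_code_vec n m \<sigma> = restrict (mixed_code n m \<sigma>) {1..n}"

lemma bij_betw_reflect: "bij_betw (\<lambda>v. n + 1 - v) {1..n} {1..(n::nat)}"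
  by (rule bij_betwI[where g = "\<lambda>v. n + 1 - v"]) auto

lemma reflect_eq_enumerate_left_code:
  assumes \<sigma>: "\<sigma> permutes {1..n}" and k: "k \<in> {1..n}"
  shows "n + 1 - \<sigma> k = enumerate ({1..} - (\<lambda>j. n + 1 - \<sigma> j) ` {1..<k}) (left_code n \<sigma> k)"
proof -
  have bij: "bij_betw (\<lambda>j. n + 1 - \<sigma> j) {1..n} {1..n}"
    using bij_betw_trans[OF permutes_imp_bij[OF \<sigma>] bij_betw_reflect] by (simp add: o_def)
  have val: "\<sigma> j \<in> {1..n}" if "j \<in> {1..n}" for j using that permutes_in_image[OF \<sigma>] by simp
  have "n + 1 - \<sigma> j < n + 1 - \<sigma> k \<longleftrightarrow> \<sigma> k < \<sigma> j" if "j \<in> {1..n}" for j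
    using val[OF that] val[OF k] by auto
  then have eq: "{j \<in> {1..n} - {1..<k}. n + 1 - \<sigma> j < n + 1 - \<sigma> k} = {j \<in> {k<..n}. \<sigma> k < \<sigma> j}"
    using k by (auto simp: order_le_less)
  have "n + 1 - \<sigma> k = enumerate ({1..} - (\<lambda>j. n + 1 - \<sigma> j) ` {1..<k})
      (card {j \<in> {1..n} - {1..<k}. n + 1 - \<sigma> j < n + 1 - \<sigma> k})"
    by (rule bij_betw_eq_enumerate[OF bij]) (use k in auto)
  then show ?thesis unfolding eq left_code_def .
qed

lemma eq_enumerate_right_code:
  assumes \<sigma>: "\<sigma> permutes {1..n}" and k: "m < k" "k \<le> n"
  shows "\<sigma> k = enumerate ({1..} - \<sigma> ` ({1..m} \<union> {k<..n})) (right_code m \<sigma> k)"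
proof -
  have eq: "{j \<in> {1..n} - ({1..m} \<union> {k<..n}). \<sigma> j < \<sigma> k} = {j \<in> {m<..<k}. \<sigma> j < \<sigma> k}"
    using k by auto (metis le_neq_implies_less less_irrefl not_less)+
  have "\<sigma> k = enumerate ({1..} - \<sigma> ` ({1..m} \<union> {k<..n}))
      (card {j \<in> {1..n} - ({1..m} \<union> {k<..n}). \<sigma> j < \<sigma> k})"
    by (rule bij_betw_eq_enumerate[OF permutes_imp_bij[OF \<sigma>]]) (use k in auto)
  then show ?thesis unfolding eq right_code_def .
qed

lemma mixed_code_less_bound:
  assumes "k \<in> {1..n}"
  shows "mixed_code n m \<sigma> k < code_bound n m k"
proof (cases "k \<le> m")
  case True
  have "left_code n \<sigma> k \<le> card {k<..n}" unfolding left_code_def by (intro card_mono) auto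
  with True assms show ?thesis by (auto simp: mixed_code_def code_bound_def)
next
  case False
  have "right_code m \<sigma> k \<le> card {m<..<k}" unfolding right_code_def by (intro card_mono) auto
  with False assms show ?thesis by (auto simp: mixed_code_def code_bound_def)
qed

lemma mixed_code_vec_in_mixed_codes: "mixed_code_vec n m \<sigma> \<in> mixed_codes n m"
  using mixed_code_less_bound unfolding mixed_codes_def mixed_code_vec_def by auto

lemma finite_mixed_codes: "finite (mixed_codes n m)"
  unfolding mixed_codes_def by (intro finite_PiE) auto

lemma mixed_code_inj:
  assumes \<sigma>: "\<sigma> permutes {1..n}" and \<tau>: "\<tau> permutes {1..n}"
    and eq: "\<And>k. k \<in> {1..n} \<Longrightarrow> mixed_code n m \<sigma> k = mixed_code n m \<tau> k"
  shows "\<sigma> = \<tau>"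
proof -
  have left: "\<sigma> k = \<tau> k" if "k \<in> {1..n}" "k \<le> m" for k
    using that
  proof (induction k rule: less_induct)
    case (less k)
    have "(\<lambda>j. n + 1 - \<sigma> j) ` {1..<k} = (\<lambda>j. n + 1 - \<tau> j) ` {1..<k}"
      using less by (intro image_cong) auto
    moreover have "left_code n \<sigma> k = left_code n \<tau> k" using eq[of k] less by (simp add: mixed_code_def)
    ultimately have "n + 1 - \<sigma> k = n + 1 - \<tau> k"
      using reflect_eq_enumerate_left_code[OF \<sigma> less(2)] reflect_eq_enumerate_left_code[OF \<tau> less(2)]
      by simp
    moreover have "\<sigma> k \<le> n" "\<tau> k \<le> n"
      using less(2) permutes_in_image[OF \<sigma>] permutes_in_image[OF \<tau>] by auto
    ultimately show ?case by linarith
  qed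
  have right: "\<sigma> k = \<tau> k" if "m < k" "k \<le> n" for k
    using that
  proof (induction "n - k" arbitrary: k rule: less_induct)
    case less
    have "\<sigma> ` ({1..m} \<union> {k<..n}) = \<tau> ` ({1..m} \<union> {k<..n})"
      using less left by (intro image_cong) auto
    moreover have "right_code m \<sigma> k = right_code m \<tau> k" using eq[of k] less by (simp add: mixed_code_def)
    ultimately show ?case
      using eq_enumerate_right_code[OF \<sigma> less(2,3)] eq_enumerate_right_code[OF \<tau> less(2,3)] by simp
  qed
  show ?thesis
  proof
    fix x
    show "\<sigma> x = \<tau> x"
      using left right permutes_not_in[OF \<sigma>] permutes_not_in[OF \<tau>]
      by (cases "x \<in> {1..n}"; cases "x \<le> m") auto
  qed
qed

lemma prod_reflected_factors:
  assumes "m \<le> n"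
  shows "(\<Prod>k\<in>{1..m}. n + 1 - k) * fact (n - m) = (fact n :: nat)"
  using assms
proof (induction m)
  case (Suc m)
  have "n - m = Suc (n - Suc m)" using Suc.prems by simp
  then have "fact (n - m) = (n - m) * fact (n - Suc m)" by simp
  moreover have "(\<Prod>k\<in>{1..Suc m}. n + 1 - k) = (\<Prod>k\<in>{1..m}. n + 1 - k) * (n - m)"
    using Suc.prems by (simp add: prod.cl_ivl_Suc)
  ultimately show ?case using Suc by (simp add: mult.assoc)
qed simp

lemma prod_shifted_factors: "(\<Prod>k\<in>{m<..m + d}. k - m) = (fact d :: nat)"
proof (induction d)
  case (Suc d)
  have "{m<..m + Suc d} = insert (m + Suc d) {m<..m + d}" by auto
  then show ?case using Suc by (simp add: mult.commute)
qed simp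

lemma card_mixed_codes:
  assumes "m \<le> n"
  shows "card (mixed_codes n m) = fact n"
proof -
  have split: "{1..n} = {1..m} \<union> {m<..m + (n - m)}" using assms by auto
  have "card (mixed_codes n m) = (\<Prod>k\<in>{1..n}. code_bound n m k)"
    unfolding mixed_codes_def by (simp add: card_PiE)
  also have "\<dots> = (\<Prod>k\<in>{1..m}. code_bound n m k) * (\<Prod>k\<in>{m<..m + (n - m)}. code_bound n m k)"
    unfolding split by (intro prod.union_disjoint) auto
  also have "\<dots> = (\<Prod>k\<in>{1..m}. n + 1 - k) * (\<Prod>k\<in>{m<..m + (n - m)}. k - m)"
    by (intro arg_cong2[where f = "(*)"] prod.cong) (auto simp: code_bound_def)
  finally show ?thesis using prod_reflected_factors[OF assms] prod_shifted_factors by simp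
qed

lemma bij_betw_mixed_code_vec:
  assumes "m \<le> n"
  shows "bij_betw (mixed_code_vec n m) {\<sigma>. \<sigma> permutes {1..n}} (mixed_codes n m)"
proof -
  have inj: "inj_on (mixed_code_vec n m) {\<sigma>. \<sigma> permutes {1..n}}"
  proof (rule inj_onI)
    fix \<sigma> \<tau> assume "\<sigma> \<in> {\<sigma>. \<sigma> permutes {1..n}}" "\<tau> \<in> {\<sigma>. \<sigma> permutes {1..n}}"
      and "mixed_code_vec n m \<sigma> = mixed_code_vec n m \<tau>"
    then show "\<sigma> = \<tau>"
      using mixed_code_inj unfolding mixed_code_vec_def by (metis mem_Collect_eq restrict_apply')
  qed
  have "card (mixed_code_vec n m ` {\<sigma>. \<sigma> permutes {1..n}}) = card (mixed_codes n m)"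
    using card_image[OF inj] card_permutations[of "{1..n}" n] card_mixed_codes[OF assms] by simp
  then have "mixed_code_vec n m ` {\<sigma>. \<sigma> permutes {1..n}} = mixed_codes n m"
    using mixed_code_vec_in_mixed_codes finite_mixed_codes by (intro card_subset_eq) auto
  with inj show ?thesis by (simp add: bij_betw_def)
qed

definition mixed_decode :: "nat \<Rightarrow> nat \<Rightarrow> (nat \<Rightarrow> nat) \<Rightarrow> nat \<Rightarrow> nat" where
  "mixed_decode n m = the_inv_into {\<sigma>. \<sigma> permutes {1..n}} (mixed_code_vec n m)"

lemma mixed_decode_permutes:
  assumes "m \<le> n" "c \<in> mixed_codes n m"
  shows "mixed_decode n m c permutes {1..n}"
  using bij_betw_the_inv_into[OF bij_betw_mixed_code_vec[OF assms(1)]] assms(2)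
  unfolding mixed_decode_def by (auto dest: bij_betwE)

lemma mixed_decode_eq_iff:
  assumes "m \<le> n" "c \<in> mixed_codes n m" "\<sigma> permutes {1..n}"
  shows "mixed_decode n m c = \<sigma> \<longleftrightarrow> c = mixed_code_vec n m \<sigma>"
proof
  have bij: "bij_betw (mixed_code_vec n m) {\<sigma>. \<sigma> permutes {1..n}} (mixed_codes n m)"
    by (rule bij_betw_mixed_code_vec[OF assms(1)])
  show "mixed_decode n m c = \<sigma> \<Longrightarrow> c = mixed_code_vec n m \<sigma>"
    using f_the_inv_into_f_bij_betw[OF bij assms(2)] unfolding mixed_decode_def by simp
  show "c = mixed_code_vec n m \<sigma> \<Longrightarrow> mixed_decode n m c = \<sigma>"
    using the_inv_into_f_f[OF bij_betw_imp_inj_on[OF bij]] assms(3) unfolding mixed_decode_def by simp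
qed

lemma mixed_code_mixed_decode:
  assumes "m \<le> n" "c \<in> mixed_codes n m" "k \<in> {1..n}"
  shows "mixed_code n m (mixed_decode n m c) k = c k"
proof -
  have "c = mixed_code_vec n m (mixed_decode n m c)"
    using mixed_decode_eq_iff[OF assms(1,2) mixed_decode_permutes[OF assms(1,2)]] by simp
  then show ?thesis using assms(3) unfolding mixed_code_vec_def by (metis restrict_apply')
qed

lemma card_noninversions_eq_sum_mixed_code:
  assumes \<sigma>: "\<sigma> permutes {1..n}"
  shows "card {(i, j). 1 \<le> i \<and> i < j \<and> j \<le> n \<and> \<sigma> i < \<sigma> j} = (\<Sum>k\<in>{1..n}. mixed_code n m \<sigma> k)"
proof -
  define F where "F k = (if k \<le> m then Pair k ` {j \<in> {k<..n}. \<sigma> k < \<sigma> j}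
                          else (\<lambda>i. (i, k)) ` {i \<in> {m<..<k}. \<sigma> i < \<sigma> k})" for k
  have partition: "{(i, j). 1 \<le> i \<and> i < j \<and> j \<le> n \<and> \<sigma> i < \<sigma> j} = (\<Union>k\<in>{1..n}. F k)"
  proof (intro equalityI subsetI)
    fix x assume "x \<in> {(i, j). 1 \<le> i \<and> i < j \<and> j \<le> n \<and> \<sigma> i < \<sigma> j}"
    then obtain i j where x: "x = (i, j)" "1 \<le> i" "i < j" "j \<le> n" "\<sigma> i < \<sigma> j" by auto
    then have "x \<in> (if i \<le> m then F i else F j)" by (auto simp: F_def)
    with x show "x \<in> (\<Union>k\<in>{1..n}. F k)" by (auto split: if_splits)
  qed (auto simp: F_def split: if_splits)
  have "disjoint_family_on F {1..n}"
    unfolding disjoint_family_on_def F_def by auto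
  then have "card (\<Union>k\<in>{1..n}. F k) = (\<Sum>k\<in>{1..n}. card (F k))"
    by (rule card_UN_disjoint') (auto simp: F_def)
  moreover have "card (F k) = mixed_code n m \<sigma> k" for k
    by (simp add: F_def mixed_code_def left_code_def right_code_def card_image inj_on_def)
  ultimately show ?thesis unfolding partition by simp
qed

lemma sum_mixed_code_add_inversions:
  assumes \<sigma>: "\<sigma> permutes {1..n}"
  shows "(\<Sum>k\<in>{1..n}. mixed_code n m \<sigma> k) + inversions n \<sigma> = card {(i, j). 1 \<le> i \<and> i < j \<and> (j::nat) \<le> n}"
proof -
  let ?P = "{(i, j). 1 \<le> i \<and> i < j \<and> (j::nat) \<le> n}"
  let ?N = "{(i, j). 1 \<le> i \<and> i < j \<and> j \<le> n \<and> \<sigma> i < \<sigma> j}"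
  let ?I = "{(i, j). 1 \<le> i \<and> i < j \<and> j \<le> n \<and> \<sigma> i > \<sigma> j}"
  have split: "?P = ?N \<union> ?I"
  proof -
    have "\<sigma> i \<noteq> \<sigma> j" if "i < j" for i j
      using permutes_inj[OF \<sigma>] that by (metis inj_eq less_irrefl)
    then show ?thesis by (auto simp: nat_neq_iff)
  qed
  have fin: "finite ?P" by (rule finite_subset[of _ "{1..n} \<times> {1..n}"]) auto
  have "finite ?N" by (rule finite_subset[OF _ fin]) auto
  moreover have "finite ?I" by (rule finite_subset[OF _ fin]) auto
  moreover have "?N \<inter> ?I = {}" by auto
  ultimately have "card ?P = card ?N + card ?I" unfolding split by (rule card_Un_disjoint)
  then have "card ?P = card ?N + inversions n \<sigma>" by (simp add: inversions_def)
  then show ?thesis using card_noninversions_eq_sum_mixed_code[OF \<sigma>] by simp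
qed

section \<open>The coupled permutation\<close>

lemma length_mprefix_nth_mprefix:
  "length (mprefix Z k) = k \<and> (\<forall>j\<in>{1..k}. mprefix Z k ! (j - 1) = mallows_inj Z j)"
proof (induction k)
  case (Suc k)
  have "mprefix Z (Suc k) = mprefix Z k @ [mallows_inj Z (Suc k)]"
    by (simp add: mallows_inj_def Let_def)
  with Suc show ?case by (auto simp: nth_append le_Suc_eq)
qed simp

lemma set_mprefix: "set (mprefix Z k) = mallows_inj Z ` {1..k}"
proof -
  have "set (mprefix Z k) = (\<lambda>j. mprefix Z k ! (j - 1)) ` {1..k}"
    using length_mprefix_nth_mprefix[of Z k] by (force simp: in_set_conv_nth image_iff)
  also have "\<dots> = mallows_inj Z ` {1..k}"
    using length_mprefix_nth_mprefix[of Z k] by (intro image_cong) auto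
  finally show ?thesis .
qed

lemma mallows_inj_eq_enumerate:
  assumes "1 \<le> k"
  shows "mallows_inj Z k = enumerate ({1..} - mallows_inj Z ` {1..<k}) (Z k - 1)"
proof -
  obtain k' where k: "k = Suc k'" using assms by (cases k) auto
  then have "{1..<k} = {1..k'}" by auto
  then show ?thesis using set_mprefix[of Z k'] unfolding k mallows_inj_def by (simp add: Let_def)
qed

lemma mallows_inj_le:
  assumes "1 \<le> k"
  shows "mallows_inj Z k \<le> (Z k - 1) + k"
proof -
  have "card (mallows_inj Z ` {1..<k}) \<le> k - 1"
    using card_image_le[of "{1..<k}" "mallows_inj Z"] by simp
  then show ?thesis
    using mallows_inj_eq_enumerate[OF assms] enumerate_Diff_le[of "mallows_inj Z ` {1..<k}" "Z k - 1"] assms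
    by simp
qed

text \<open>Reducing \<open>Z - 1\<close> modulo the range \<open>N\<close> of a code entry turns the geometric law of \<open>Z\<close> into
  the truncated geometric law of that entry.\<close>
definition coupled_code :: "nat \<Rightarrow> nat \<Rightarrow> (nat \<Rightarrow> nat) \<Rightarrow> (nat \<Rightarrow> nat) \<Rightarrow> nat \<Rightarrow> nat" where
  "coupled_code n m Z Z' = (\<lambda>k\<in>{1..n}.
     if k \<le> m then (Z k - 1) mod (n + 1 - k) else (Z' (n + 1 - k) - 1) mod (k - m))"

definition coupled_perm :: "nat \<Rightarrow> nat \<Rightarrow> (nat \<Rightarrow> nat) \<Rightarrow> (nat \<Rightarrow> nat) \<Rightarrow> nat \<Rightarrow> nat" where
  "coupled_perm n m Z Z' = mixed_decode n m (coupled_code n m Z Z')"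

lemma coupled_code_in_mixed_codes: "m \<le> n \<Longrightarrow> coupled_code n m Z Z' \<in> mixed_codes n m"
  unfolding mixed_codes_def coupled_code_def code_bound_def by (auto intro!: mod_less_divisor)

lemma coupled_perm_permutes: "m \<le> n \<Longrightarrow> coupled_perm n m Z Z' permutes {1..n}"
  unfolding coupled_perm_def by (rule mixed_decode_permutes[OF _ coupled_code_in_mixed_codes])

lemma mixed_code_coupled_perm:
  "m \<le> n \<Longrightarrow> k \<in> {1..n} \<Longrightarrow> mixed_code n m (coupled_perm n m Z Z') k = coupled_code n m Z Z' k"
  unfolding coupled_perm_def by (rule mixed_code_mixed_decode[OF _ coupled_code_in_mixed_codes])

lemma mallows_inj_eq_reflect_coupled_perm:
  assumes nm: "2 * m + 2 * D \<le> n" and ZD: "\<And>k. k \<in> {1..m} \<Longrightarrow> Z k - 1 \<le> D"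
    and k: "k \<in> {1..m}"
  shows "mallows_inj Z k = n + 1 - coupled_perm n m Z Z' k"
  using k
proof (induction k rule: less_induct)
  case (less k)
  let ?\<sigma> = "coupled_perm n m Z Z'"
  have kn: "k \<in> {1..n}" using less.prems nm by auto
  have "left_code n ?\<sigma> k = mixed_code n m ?\<sigma> k" using less.prems by (simp add: mixed_code_def)
  also have "\<dots> = Z k - 1"
    using mixed_code_coupled_perm[of m n k] kn less.prems ZD[of k] nm by (simp add: coupled_code_def)
  finally have "left_code n ?\<sigma> k = Z k - 1" .
  moreover have "mallows_inj Z ` {1..<k} = (\<lambda>j. n + 1 - ?\<sigma> j) ` {1..<k}"
    using less by (intro image_cong) auto
  ultimately show ?case
    using mallows_inj_eq_enumerate[of k Z] reflect_eq_enumerate_left_code[OF coupled_perm_permutes kn] nm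
      less.prems by simp
qed

lemma reflect_image_less: "k \<le> n \<Longrightarrow> (\<lambda>j. n + 1 - j) ` {1..<k} = {n + 1 - k<..(n::nat)}"
proof (intro equalityI subsetI)
  fix x assume "k \<le> n" "x \<in> {n + 1 - k<..n}"
  then have "n + 1 - x \<in> {1..<k}" "x = n + 1 - (n + 1 - x)" by auto
  then show "x \<in> (\<lambda>j. n + 1 - j) ` {1..<k}" by blast
qed auto

text \<open>The values at positions \<open>1..m\<close> lie above \<open>m + D\<close>, so below \<open>m + D\<close> the enumeration
  defining \<open>\<Pi>'\<close> agrees with the one that recovers the permutation from its right code.\<close>
lemma mallows_inj_eq_coupled_perm_reflect:
  assumes nm: "2 * m + 2 * D \<le> n"
    and ZD: "\<And>k. k \<in> {1..m} \<Longrightarrow> Z k - 1 \<le> D" and ZD': "\<And>k. k \<in> {1..m} \<Longrightarrow> Z' k - 1 \<le> D"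
    and i: "i \<in> {1..m}"
  shows "mallows_inj Z' i = coupled_perm n m Z Z' (n + 1 - i)"
  using i
proof (induction i rule: less_induct)
  case (less i)
  let ?\<sigma> = "coupled_perm n m Z Z'"
  define P where "P = n + 1 - i"
  have mn: "m \<le> n" using nm by simp
  have P: "m < P" "P \<le> n" "i = n + 1 - P" using less.prems nm by (auto simp: P_def)
  have \<sigma>: "?\<sigma> permutes {1..n}" by (rule coupled_perm_permutes[OF mn])
  have top: "m + D < ?\<sigma> j" if "j \<in> {1..m}" for j
    using mallows_inj_eq_reflect_coupled_perm[where Z = Z and Z' = Z', OF nm ZD that]
      mallows_inj_le[of j Z] ZD[OF that] that nm permutes_in_image[OF \<sigma>, of j] by auto
  let ?S = "{1..} - ?\<sigma> ` {P<..n}" and ?T = "{1..} - ?\<sigma> ` ({1..m} \<union> {P<..n})"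
  have "mallows_inj Z' ` {1..<i} = (\<lambda>j. ?\<sigma> (n + 1 - j)) ` {1..<i}"
    using less by (intro image_cong) auto
  then have "mallows_inj Z' ` {1..<i} = ?\<sigma> ` (\<lambda>j. n + 1 - j) ` {1..<i}"
    by (simp add: image_image)
  then have "mallows_inj Z' ` {1..<i} = ?\<sigma> ` {P<..n}"
    using reflect_image_less[of i n] less.prems nm by (simp add: P_def)
  then have \<Pi>': "mallows_inj Z' i = enumerate ?S (Z' i - 1)"
    using mallows_inj_eq_enumerate[of i Z'] less.prems by simp
  have "Z' i - 1 < P - m" using ZD'[OF less.prems] less.prems nm by (auto simp: P_def)
  then have "right_code m ?\<sigma> P = Z' i - 1"
    using mixed_code_coupled_perm[OF mn, of P] P by (simp add: mixed_code_def coupled_code_def)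
  then have "?\<sigma> P = enumerate ?T (Z' i - 1)"
    using eq_enumerate_right_code[OF \<sigma> P(1,2)] by simp
  also have "\<dots> = enumerate ?S (Z' i - 1)"
  proof (rule enumerate_cong_below)
    show "infinite ?S" "infinite ?T" by (simp_all add: infinite_Ici Diff_infinite_finite)
    show "?S \<inter> {..m + D} = ?T \<inter> {..m + D}" using top by fastforce
    show "enumerate ?S (Z' i - 1) \<le> m + D"
      using \<Pi>' mallows_inj_le[of i Z'] ZD'[OF less.prems] less.prems by auto
  qed
  finally show ?case using \<Pi>' by (simp add: P_def)
qed

section \<open>The law of the coupled permutation\<close>

definition geom_seq :: "real \<Rightarrow> (nat \<Rightarrow> nat) measure" where
  "geom_seq p = (\<Pi>\<^sub>M i\<in>UNIV. measure_pmf (geom1 p))"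

lemma space_FunM [simp]: "space FunM = UNIV"
  unfolding FunM_def by (simp add: space_PiM)

lemma space_geom_seq [simp]: "space (geom_seq p) = UNIV"
  unfolding geom_seq_def by (simp add: space_PiM)

lemma sets_geom_seq: "sets (geom_seq p) = sets FunM"
  unfolding geom_seq_def FunM_def by (intro sets_PiM_cong) auto

lemma prob_space_geom_seq: "prob_space (geom_seq p)"
  unfolding geom_seq_def by (intro prob_space_PiM prob_space_measure_pmf)

lemma measurable_mprefix: "(\<lambda>Z. mprefix Z i) \<in> FunM \<rightarrow>\<^sub>M count_space UNIV"
proof (induction i)
  case (Suc i)
  let ?step = "\<lambda>P Z. P @ [enumerate ({1..} - set P) (Z (Suc i) - 1)]"
  have "(\<lambda>Z. Z (Suc i)) \<in> FunM \<rightarrow>\<^sub>M count_space UNIV"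
    unfolding FunM_def by (rule measurable_component_singleton) simp
  then have "?step P \<in> FunM \<rightarrow>\<^sub>M count_space UNIV" for P
    by (rule measurable_compose[where g = "\<lambda>z. P @ [enumerate ({1..} - set P) (z - 1)]"]) simp
  then have "(\<lambda>Z. ?step (mprefix Z i) Z) \<in> FunM \<rightarrow>\<^sub>M count_space UNIV"
    by (rule measurable_compose_countable[OF _ Suc])
  then show ?case by (simp add: Let_def)
qed simp

lemma measurable_mallows_inj: "mallows_inj \<in> geom_seq p \<rightarrow>\<^sub>M FunM"
proof -
  have "(\<lambda>Z. mallows_inj Z i) \<in> FunM \<rightarrow>\<^sub>M count_space UNIV" for i
    unfolding mallows_inj_def
    by (rule measurable_compose[OF measurable_mprefix[of i], where g = "\<lambda>P. if i = 0 then 0 else last P"]) simp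
  then have "mallows_inj \<in> FunM \<rightarrow>\<^sub>M FunM"
    unfolding FunM_def by (intro measurable_PiM_single') auto
  then show ?thesis by (simp add: measurable_cong_sets[OF sets_geom_seq refl])
qed

lemma mallows_N_eq_distr_geom_seq: "mallows_N p = distr (geom_seq p) FunM mallows_inj"
  unfolding mallows_N_def geom_seq_def ..

lemma emeasure_geom_seq_cylinder:
  assumes "finite J"
  shows "emeasure (geom_seq p) {Z. \<forall>j\<in>J. Z j \<in> X j} = (\<Prod>j\<in>J. emeasure (measure_pmf (geom1 p)) (X j))"
proof -
  have "{Z. \<forall>j\<in>J. Z j \<in> X j} = prod_emb UNIV (\<lambda>_. measure_pmf (geom1 p)) J (Pi\<^sub>E J X)"
    unfolding prod_emb_def by (auto simp: PiE_iff)
  then show ?thesis unfolding geom_seq_def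
    by (simp add: emeasure_PiM_emb prob_space_measure_pmf assms)
qed

lemma emeasure_geom1_mod:
  assumes p: "0 < p" "p < 1" and r: "r < N"
  shows "emeasure (measure_pmf (geom1 p)) {z. (z - 1) mod N = r} = ennreal ((1 - p) * p ^ r / (1 - p ^ N))"
proof -
  let ?g = "geometric_pmf (1 - p)"
  have N: "0 < N" using r by simp
  have "emeasure (measure_pmf (geom1 p)) {z. (z - 1) mod N = r} = emeasure (measure_pmf ?g) {g. g mod N = r}"
    unfolding geom1_def by (simp add: vimage_def)
  also have "\<dots> = (\<integral>\<^sup>+ g. pmf ?g g \<partial>count_space {g. g mod N = r})"
    by (simp add: nn_integral_pmf)
  also have "\<dots> = (\<integral>\<^sup>+ j. pmf ?g (r + j * N) \<partial>count_space UNIV)"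
  proof (rule nn_integral_bij_count_space[symmetric], rule bij_betwI')
    fix y assume "y \<in> {g. g mod N = r}"
    then have "y = r + y div N * N" using mod_div_mult_eq[of y N] by simp
    then show "\<exists>x\<in>UNIV. y = r + x * N" by blast
  qed (use N r in auto)
  also have "\<dots> = (\<Sum>j. ennreal (pmf ?g (r + j * N)))" by (rule nn_integral_count_space_nat)
  also have "\<dots> = ennreal ((1 - p) * p ^ r * (1 / (1 - p ^ N)))"
  proof (rule suminf_ennreal_eq)
    have "pmf ?g (r + j * N) = (1 - p) * p ^ r * (p ^ N) ^ j" for j
      using p by (simp add: power_add power_mult mult.commute mult.left_commute)
    moreover have "(\<lambda>j. (p ^ N) ^ j) sums (1 / (1 - p ^ N))"
      using p N by (intro geometric_sums) (simp add: abs_of_pos power_less_one_iff)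
    ultimately show "(\<lambda>j. pmf ?g (r + j * N)) sums ((1 - p) * p ^ r * (1 / (1 - p ^ N)))"
      by (simp only: sums_mult)
  qed simp
  finally show ?thesis by simp
qed

lemma emeasure_geom1_le:
  assumes p: "0 < p" "p < 1"
  shows "emeasure (measure_pmf (geom1 p)) {z. z - 1 \<le> D} = ennreal (1 - p ^ Suc D)"
proof -
  have "emeasure (measure_pmf (geom1 p)) {z. z - 1 \<le> D} = emeasure (measure_pmf (geometric_pmf (1 - p))) {..D}"
    unfolding geom1_def by (simp add: vimage_def atMost_def)
  also have "\<dots> = ennreal (\<Sum>g\<le>D. p ^ g * (1 - p))"
    using p by (simp add: emeasure_measure_pmf_finite sum_ennreal)
  also have "(\<Sum>g\<le>D. p ^ g * (1 - p)) = 1 - p ^ Suc D"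
    by (induction D) (auto simp: algebra_simps)
  finally show ?thesis .
qed

lemma emeasure_geom_seq_residues:
  assumes p: "0 < p" "p < 1" and J: "finite J" and r: "\<And>j. j \<in> J \<Longrightarrow> r j < N j"
  shows "emeasure (geom_seq p) {Z. \<forall>j\<in>J. (Z j - 1) mod N j = r j}
    = ennreal (\<Prod>j\<in>J. (1 - p) * p ^ r j / (1 - p ^ N j))"
proof -
  have "emeasure (geom_seq p) {Z. \<forall>j\<in>J. (Z j - 1) mod N j = r j}
      = (\<Prod>j\<in>J. emeasure (measure_pmf (geom1 p)) {z. (z - 1) mod N j = r j})"
    using emeasure_geom_seq_cylinder[OF J, of p "\<lambda>j. {z. (z - 1) mod N j = r j}"] by simp
  also have "\<dots> = (\<Prod>j\<in>J. ennreal ((1 - p) * p ^ r j / (1 - p ^ N j)))"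
    using emeasure_geom1_mod[OF p r] by simp
  also have "\<dots> = ennreal (\<Prod>j\<in>J. (1 - p) * p ^ r j / (1 - p ^ N j))"
    using p by (intro prod_ennreal) (simp add: power_le_one)
  finally show ?thesis .
qed

definition left_residues :: "nat \<Rightarrow> nat \<Rightarrow> (nat \<Rightarrow> nat) \<Rightarrow> (nat \<Rightarrow> nat) set" where
  "left_residues n m c = {Z. \<forall>k\<in>{1..m}. (Z k - 1) mod (n + 1 - k) = c k}"

definition right_residues :: "nat \<Rightarrow> nat \<Rightarrow> (nat \<Rightarrow> nat) \<Rightarrow> (nat \<Rightarrow> nat) set" where
  "right_residues n m c = {Z'. \<forall>i\<in>{1..n - m}. (Z' i - 1) mod (n + 1 - i - m) = c (n + 1 - i)}"

lemma left_residues_sets: "left_residues n m c \<in> sets (geom_seq p)"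
proof -
  have "left_residues n m c = {Z \<in> space (geom_seq p). \<forall>k\<in>{1..m}. Z k \<in> {z. (z - 1) mod (n + 1 - k) = c k}}"
    unfolding left_residues_def by simp
  also have "\<dots> \<in> sets (geom_seq p)" unfolding geom_seq_def by measurable
  finally show ?thesis .
qed

lemma right_residues_sets: "right_residues n m c \<in> sets (geom_seq p)"
proof -
  have "right_residues n m c = {Z \<in> space (geom_seq p). \<forall>i\<in>{1..n - m}. Z i \<in> {z. (z - 1) mod (n + 1 - i - m) = c (n + 1 - i)}}"
    unfolding right_residues_def by simp
  also have "\<dots> \<in> sets (geom_seq p)" unfolding geom_seq_def by measurable
  finally show ?thesis .
qed

lemma coupled_code_eq_iff:
  assumes mn: "m \<le> n" and c: "c \<in> mixed_codes n m"
  shows "coupled_code n m Z Z' = c \<longleftrightarrow> Z \<in> left_residues n m c \<and> Z' \<in> right_residues n m c"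
proof -
  have ext: "coupled_code n m Z Z' \<in> extensional {1..n}" "c \<in> extensional {1..n}"
    using c unfolding coupled_code_def mixed_codes_def by (auto simp: PiE_def)
  have "coupled_code n m Z Z' = c \<longleftrightarrow> (\<forall>k\<in>{1..n}. coupled_code n m Z Z' k = c k)"
    using ext by (auto intro: extensionalityI)
  also have "\<dots> \<longleftrightarrow> (\<forall>k\<in>{1..m}. coupled_code n m Z Z' k = c k) \<and> (\<forall>k\<in>{m<..n}. coupled_code n m Z Z' k = c k)"
  proof -
    have "{1..n} = {1..m} \<union> {m<..n}" using mn by auto
    then show ?thesis by (simp only: ball_Un)
  qed
  also have "(\<forall>k\<in>{1..m}. coupled_code n m Z Z' k = c k) \<longleftrightarrow> Z \<in> left_residues n m c"
    using mn unfolding left_residues_def coupled_code_def by auto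
  also have "(\<forall>k\<in>{m<..n}. coupled_code n m Z Z' k = c k) \<longleftrightarrow> Z' \<in> right_residues n m c"
  proof -
    have "{m<..n} = (\<lambda>i. n + 1 - i) ` {1..n - m}"
    proof (intro equalityI subsetI)
      fix k assume "k \<in> {m<..n}"
      then have "n + 1 - k \<in> {1..n - m}" "k = n + 1 - (n + 1 - k)" by auto
      then show "k \<in> (\<lambda>i. n + 1 - i) ` {1..n - m}" by blast
    qed auto
    then have "(\<forall>k\<in>{m<..n}. coupled_code n m Z Z' k = c k) \<longleftrightarrow>
        (\<forall>i\<in>{1..n - m}. coupled_code n m Z Z' (n + 1 - i) = c (n + 1 - i))"
      by simp
    also have "\<dots> \<longleftrightarrow> Z' \<in> right_residues n m c"
      unfolding right_residues_def mem_Collect_eq by (intro ball_cong refl) (auto simp: coupled_code_def)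
    finally show ?thesis .
  qed
  finally show ?thesis .
qed

lemma coupled_perm_eq_iff:
  assumes "m \<le> n" "s permutes {1..n}"
  shows "coupled_perm n m Z Z' = s \<longleftrightarrow>
    Z \<in> left_residues n m (mixed_code_vec n m s) \<and> Z' \<in> right_residues n m (mixed_code_vec n m s)"
  unfolding coupled_perm_def
  using mixed_decode_eq_iff[OF assms(1) coupled_code_in_mixed_codes[OF assms(1)] assms(2)]
    coupled_code_eq_iff[OF assms(1) mixed_code_vec_in_mixed_codes] by simp

lemma measurable_coupled_perm:
  assumes mn: "m \<le> n"
  shows "(\<lambda>x. coupled_perm n m (fst x) (snd x)) \<in> geom_seq p \<Otimes>\<^sub>M geom_seq p \<rightarrow>\<^sub>M FunM"
proof -
  let ?c = "\<lambda>x. coupled_code n m (fst x) (snd x)"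
  have code: "?c \<in> geom_seq p \<Otimes>\<^sub>M geom_seq p \<rightarrow>\<^sub>M count_space (mixed_codes n m)"
  proof (subst measurable_count_space_eq2[OF finite_mixed_codes], intro conjI ballI)
    show "?c \<in> space (geom_seq p \<Otimes>\<^sub>M geom_seq p) \<rightarrow> mixed_codes n m"
      using coupled_code_in_mixed_codes[OF mn] by auto
    fix c assume c: "c \<in> mixed_codes n m"
    have "?c -` {c} \<inter> space (geom_seq p \<Otimes>\<^sub>M geom_seq p) = left_residues n m c \<times> right_residues n m c"
    proof (rule set_eqI)
      fix x :: "(nat \<Rightarrow> nat) \<times> (nat \<Rightarrow> nat)"
      show "x \<in> ?c -` {c} \<inter> space (geom_seq p \<Otimes>\<^sub>M geom_seq p) \<longleftrightarrow> x \<in> left_residues n m c \<times> right_residues n m c"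
        using coupled_code_eq_iff[OF mn c, of "fst x" "snd x"] by (simp add: space_pair_measure mem_Times_iff)
    qed
    then show "?c -` {c} \<inter> space (geom_seq p \<Otimes>\<^sub>M geom_seq p) \<in> sets (geom_seq p \<Otimes>\<^sub>M geom_seq p)"
      by (simp add: pair_measureI left_residues_sets right_residues_sets)
  qed
  have "mixed_decode n m \<in> count_space (mixed_codes n m) \<rightarrow>\<^sub>M FunM"
    by (rule measurable_count_space_eq1[THEN iffD2]) simp
  from measurable_comp[OF code this] show ?thesis unfolding coupled_perm_def o_def .
qed

definition coupling_const :: "nat \<Rightarrow> nat \<Rightarrow> real \<Rightarrow> real" where
  "coupling_const n m p = (\<Prod>k\<in>{1..m}. (1 - p) / (1 - p ^ (n + 1 - k))) *
     (\<Prod>i\<in>{1..n - m}. (1 - p) / (1 - p ^ (n + 1 - i - m)))"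

lemma coupling_const_nonneg: "0 < p \<Longrightarrow> p < 1 \<Longrightarrow> 0 \<le> coupling_const n m p"
  unfolding coupling_const_def by (intro mult_nonneg_nonneg prod_nonneg) (auto simp: power_le_one)

lemma mixed_codes_less_bound: "c \<in> mixed_codes n m \<Longrightarrow> k \<in> {1..n} \<Longrightarrow> c k < code_bound n m k"
  unfolding mixed_codes_def by auto

lemma emeasure_left_residues:
  assumes p: "0 < p" "p < 1" and mn: "m \<le> n" and c: "c \<in> mixed_codes n m"
  shows "emeasure (geom_seq p) (left_residues n m c)
    = ennreal (\<Prod>k\<in>{1..m}. (1 - p) * p ^ c k / (1 - p ^ (n + 1 - k)))"
proof -
  have "c k < n + 1 - k" if "k \<in> {1..m}" for k
    using mixed_codes_less_bound[OF c, of k] that mn by (simp add: code_bound_def)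
  then show ?thesis unfolding left_residues_def by (intro emeasure_geom_seq_residues[OF p]) auto
qed

lemma emeasure_right_residues:
  assumes p: "0 < p" "p < 1" and c: "c \<in> mixed_codes n m"
  shows "emeasure (geom_seq p) (right_residues n m c)
    = ennreal (\<Prod>i\<in>{1..n - m}. (1 - p) * p ^ c (n + 1 - i) / (1 - p ^ (n + 1 - i - m)))"
proof -
  have "c (n + 1 - i) < n + 1 - i - m" if "i \<in> {1..n - m}" for i
  proof -
    have "n + 1 - i \<in> {1..n}" "\<not> n + 1 - i \<le> m" using that by auto
    then show ?thesis using mixed_codes_less_bound[OF c, of "n + 1 - i"] by (simp add: code_bound_def)
  qed
  then show ?thesis unfolding right_residues_def by (intro emeasure_geom_seq_residues[OF p]) auto
qed

lemma emeasure_coupled_perm_fibre: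
  assumes p: "0 < p" "p < 1" and mn: "m \<le> n" and s: "s permutes {1..n}"
  shows "emeasure (geom_seq p \<Otimes>\<^sub>M geom_seq p) {x. coupled_perm n m (fst x) (snd x) = s}
    = ennreal (coupling_const n m p * p ^ (\<Sum>k\<in>{1..n}. mixed_code n m s k))"
proof -
  define c where "c = mixed_code_vec n m s"
  have c: "c \<in> mixed_codes n m" unfolding c_def by (rule mixed_code_vec_in_mixed_codes)
  have factor: "(\<Prod>j\<in>J. (1 - p) * x j / b j) = (\<Prod>j\<in>J. (1 - p) / b j) * (\<Prod>j\<in>J. x j)"
    for J and x b :: "nat \<Rightarrow> real"
    by (subst prod.distrib[symmetric]) simp
  have "{x. coupled_perm n m (fst x) (snd x) = s} = left_residues n m c \<times> right_residues n m c"
    using coupled_perm_eq_iff[OF mn s] unfolding c_def by auto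
  then have "emeasure (geom_seq p \<Otimes>\<^sub>M geom_seq p) {x. coupled_perm n m (fst x) (snd x) = s}
      = emeasure (geom_seq p) (left_residues n m c) * emeasure (geom_seq p) (right_residues n m c)"
    using sigma_finite_measure.emeasure_pair_measure_Times[OF
        prob_space_imp_sigma_finite[OF prob_space_geom_seq] left_residues_sets right_residues_sets]
    by simp
  also have "\<dots> = ennreal (coupling_const n m p * (p ^ (\<Sum>k\<in>{1..m}. c k) * p ^ (\<Sum>i\<in>{1..n - m}. c (n + 1 - i))))"
    using p unfolding emeasure_left_residues[OF p mn c] emeasure_right_residues[OF p c]
      factor coupling_const_def power_sum
    by (subst ennreal_mult''[symmetric]) (auto simp: power_le_one ac_simps intro!: prod_nonneg mult_nonneg_nonneg)
  also have "(\<Sum>i\<in>{1..n - m}. c (n + 1 - i)) = (\<Sum>k\<in>{m<..n}. c k)"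
    by (rule sum.reindex_bij_witness[where i = "\<lambda>k. n + 1 - k" and j = "\<lambda>i. n + 1 - i"]) (use mn in auto)
  also have "p ^ (\<Sum>k\<in>{1..m}. c k) * p ^ (\<Sum>k\<in>{m<..n}. c k) = p ^ (\<Sum>k\<in>{1..n}. mixed_code n m s k)"
  proof -
    have "{1..n} = {1..m} \<union> {m<..n}" using mn by auto
    then have "(\<Sum>k\<in>{1..n}. c k) = (\<Sum>k\<in>{1..m}. c k) + (\<Sum>k\<in>{m<..n}. c k)"
      by (simp only:) (rule sum.union_disjoint, auto)
    then show ?thesis by (simp add: power_add c_def mixed_code_vec_def)
  qed
  finally show ?thesis .
qed

lemma distr_eq_measure_pmf_finite_fibres:
  assumes f: "f \<in> M \<rightarrow>\<^sub>M N" and N: "space N = UNIV"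
    and P: "finite P" "\<And>x. x \<in> space M \<Longrightarrow> f x \<in> P" "set_pmf Q \<subseteq> P"
    and fibre_sets: "\<And>s. s \<in> P \<Longrightarrow> f -` {s} \<inter> space M \<in> sets M"
    and fibre_mass: "\<And>s. s \<in> P \<Longrightarrow> emeasure M (f -` {s} \<inter> space M) = pmf Q s"
  shows "distr M N f = distr (measure_pmf Q) N (\<lambda>x. x)"
proof (rule measure_eqI)
  fix A assume "A \<in> sets (distr M N f)"
  then have A: "A \<in> sets N" by simp
  have cover: "f -` A \<inter> space M = (\<Union>s\<in>A \<inter> P. f -` {s} \<inter> space M)" using P(2) by auto
  have "emeasure (distr M N f) A = emeasure M (f -` A \<inter> space M)" by (rule emeasure_distr[OF f A])
  also have "\<dots> = (\<Sum>s\<in>A \<inter> P. emeasure M (f -` {s} \<inter> space M))"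
    unfolding cover by (rule sum_emeasure[symmetric]) (use fibre_sets P(1) in \<open>auto simp: disjoint_family_on_def\<close>)
  also have "\<dots> = (\<Sum>s\<in>A \<inter> P. ennreal (pmf Q s))" using fibre_mass by simp
  also have "\<dots> = emeasure (measure_pmf Q) (A \<inter> P)"
    using P(1) by (simp add: emeasure_measure_pmf_finite)
  also have "\<dots> = emeasure (measure_pmf Q) A"
    using P(3) by (intro emeasure_eq_AE) (auto simp: AE_measure_pmf_iff)
  also have "\<dots> = emeasure (distr (measure_pmf Q) N (\<lambda>x. x)) A"
    using A N by (simp add: emeasure_distr)
  finally show "emeasure (distr M N f) A = emeasure (distr (measure_pmf Q) N (\<lambda>x. x)) A" .
qed simp

definition mallows_weight :: "nat \<Rightarrow> real \<Rightarrow> real" where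
  "mallows_weight n q = (\<Sum>\<tau> | \<tau> permutes {1..n}. q ^ inversions n \<tau>)"

lemma mallows_weight_pos: "0 < q \<Longrightarrow> 0 < mallows_weight n q"
  unfolding mallows_weight_def
  by (intro sum_pos2[where i = id]) (auto simp: permutes_id finite_permutations)

lemma pmf_mallows_fin:
  assumes "0 < q"
  shows "pmf (mallows_fin n q) s = (if s permutes {1..n} then q ^ inversions n s / mallows_weight n q else 0)"
proof -
  let ?f = "\<lambda>\<sigma>. if \<sigma> permutes {1..n} then q ^ inversions n \<sigma> / mallows_weight n q else 0"
  have fin: "finite {\<tau>. \<tau> permutes {1..n}}" by (simp add: finite_permutations)
  have nonneg: "0 \<le> ?f x" for x using assms mallows_weight_pos[OF assms, of n] by simp
  have "(\<integral>\<^sup>+x. ennreal (?f x) \<partial>count_space UNIV) = (\<Sum>\<sigma> | \<sigma> permutes {1..n}. ennreal (?f \<sigma>))"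
    by (rule nn_integral_count_space'[OF fin]) auto
  also have "\<dots> = ennreal (\<Sum>\<sigma> | \<sigma> permutes {1..n}. ?f \<sigma>)"
    using nonneg by (rule sum_ennreal)
  also have "(\<Sum>\<sigma> | \<sigma> permutes {1..n}. ?f \<sigma>) = 1"
    using mallows_weight_pos[OF assms, of n]
    by (simp add: mallows_weight_def sum_divide_distrib[symmetric])
  finally show ?thesis
    using pmf_embed_pmf[of ?f] nonneg unfolding mallows_fin_def mallows_weight_def by simp
qed

lemma coupled_perm_fibre_sets:
  assumes "m \<le> n" "s permutes {1..n}"
  shows "{x. coupled_perm n m (fst x) (snd x) = s} \<in> sets (geom_seq p \<Otimes>\<^sub>M geom_seq p)"
proof -
  have "{x. coupled_perm n m (fst x) (snd x) = s} =
      left_residues n m (mixed_code_vec n m s) \<times> right_residues n m (mixed_code_vec n m s)"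
    using coupled_perm_eq_iff[OF assms] by auto
  then show ?thesis by (simp add: pair_measureI left_residues_sets right_residues_sets)
qed

text \<open>The normalising constant \<open>K\<close> is never computed: total mass one forces \<open>K = 1 / mallows_weight n q\<close>.\<close>
lemma emeasure_coupled_perm_fibre_eq_pmf:
  assumes q: "1 < q" and mn: "m \<le> n" and s: "s permutes {1..n}"
  shows "emeasure (geom_seq (1 / q) \<Otimes>\<^sub>M geom_seq (1 / q)) {x. coupled_perm n m (fst x) (snd x) = s}
    = pmf (mallows_fin n q) s"
proof -
  define p where "p = 1 / q"
  have p: "0 < p" "p < 1" "p * q = 1" using q by (auto simp: p_def)
  define M where "M = geom_seq p \<Otimes>\<^sub>M geom_seq p"
  define E where "E \<sigma> = {x. coupled_perm n m (fst x) (snd x) = \<sigma>}" for \<sigma>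
  define K where "K = coupling_const n m p * p ^ card {(i, j). 1 \<le> i \<and> i < j \<and> (j::nat) \<le> n}"
  have K: "0 \<le> K" using coupling_const_nonneg[OF p(1,2)] p by (simp add: K_def)
  have mass: "emeasure M (E \<sigma>) = ennreal (K * q ^ inversions n \<sigma>)" if "\<sigma> permutes {1..n}" for \<sigma>
  proof -
    have "p ^ (\<Sum>k\<in>{1..n}. mixed_code n m \<sigma> k) = p ^ (\<Sum>k\<in>{1..n}. mixed_code n m \<sigma> k) * (p * q) ^ inversions n \<sigma>"
      using p by simp
    also have "\<dots> = p ^ ((\<Sum>k\<in>{1..n}. mixed_code n m \<sigma> k) + inversions n \<sigma>) * q ^ inversions n \<sigma>"
      by (simp add: power_add power_mult_distrib)
    also have "\<dots> = p ^ card {(i, j). 1 \<le> i \<and> i < j \<and> (j::nat) \<le> n} * q ^ inversions n \<sigma>"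
      unfolding sum_mixed_code_add_inversions[OF that] ..
    finally show ?thesis
      using emeasure_coupled_perm_fibre[OF p(1,2) mn that] by (simp add: M_def E_def K_def mult.assoc)
  qed
  have "(\<Sum>\<sigma> | \<sigma> permutes {1..n}. emeasure M (E \<sigma>)) = emeasure M (\<Union>\<sigma>\<in>{\<sigma>. \<sigma> permutes {1..n}}. E \<sigma>)"
    using coupled_perm_fibre_sets[OF mn]
    by (intro sum_emeasure) (auto simp: M_def E_def disjoint_family_on_def finite_permutations)
  also have "(\<Union>\<sigma>\<in>{\<sigma>. \<sigma> permutes {1..n}}. E \<sigma>) = space M"
    using coupled_perm_permutes[OF mn] by (auto simp: M_def E_def space_pair_measure)
  also have "emeasure M (space M) = 1"
    unfolding M_def by (intro prob_space.emeasure_space_1 prob_space_pair prob_space_geom_seq)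
  finally have "ennreal (\<Sum>\<sigma> | \<sigma> permutes {1..n}. K * q ^ inversions n \<sigma>) = 1"
    using mass K q by (simp add: sum_ennreal)
  then have "K * mallows_weight n q = 1" by (simp add: mallows_weight_def sum_distrib_left)
  then have "K = 1 / mallows_weight n q" using mallows_weight_pos[of q n] q by (simp add: field_simps)
  then show ?thesis
    using mass[OF s] pmf_mallows_fin[of q n s] s q by (simp add: M_def E_def p_def)
qed

lemma distr_coupled_perm:
  assumes q: "1 < q" and mn: "m \<le> n"
  shows "distr (geom_seq (1 / q) \<Otimes>\<^sub>M geom_seq (1 / q)) FunM (\<lambda>x. coupled_perm n m (fst x) (snd x))
    = distr (measure_pmf (mallows_fin n q)) FunM (\<lambda>x. x)"
proof (rule distr_eq_measure_pmf_finite_fibres[where P = "{\<sigma>. \<sigma> permutes {1..n}}"])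
  show "(\<lambda>x. coupled_perm n m (fst x) (snd x)) \<in> geom_seq (1 / q) \<Otimes>\<^sub>M geom_seq (1 / q) \<rightarrow>\<^sub>M FunM"
    by (rule measurable_coupled_perm[OF mn])
  show "set_pmf (mallows_fin n q) \<subseteq> {\<sigma>. \<sigma> permutes {1..n}}"
    using q by (auto simp: set_pmf_iff pmf_mallows_fin split: if_splits)
qed (use coupled_perm_permutes[OF mn] coupled_perm_fibre_sets[OF mn] emeasure_coupled_perm_fibre_eq_pmf[OF q mn]
  in \<open>auto simp: finite_permutations space_pair_measure vimage_def\<close>)

section \<open>The coupling\<close>

definition prefix_len :: "nat \<Rightarrow> nat" where
  "prefix_len n = nat \<lfloor>real n / 2 - (ln (real n))\<^sup>2\<rfloor>"

definition jump_bound :: "nat \<Rightarrow> nat" where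
  "jump_bound n = nat \<lfloor>(ln (real n))\<^sup>2\<rfloor>"

lemma real_jump_bound: "real (jump_bound n) = of_int \<lfloor>(ln (real n))\<^sup>2\<rfloor>"
  unfolding jump_bound_def by (simp add: of_nat_nat)

lemma le_prefix_len_iff: "1 \<le> i \<Longrightarrow> int i \<le> \<lfloor>real n / 2 - (ln (real n))\<^sup>2\<rfloor> \<longleftrightarrow> i \<le> prefix_len n"
  unfolding prefix_len_def by linarith

lemma prefix_len_le: "prefix_len n \<le> n"
proof -
  have "0 \<le> (ln (real n))\<^sup>2" by simp
  then have "real_of_int \<lfloor>real n / 2 - (ln (real n))\<^sup>2\<rfloor> \<le> real n"
    using of_int_floor_le[of "real n / 2 - (ln (real n))\<^sup>2"] by linarith
  then show ?thesis unfolding prefix_len_def by linarith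
qed

lemma prefix_len_jump_bound:
  assumes "1 \<le> prefix_len n"
  shows "2 * prefix_len n + 2 * jump_bound n \<le> n"
proof -
  have "real (prefix_len n) \<le> real n / 2 - (ln (real n))\<^sup>2"
    using assms unfolding prefix_len_def by linarith
  moreover have "real (jump_bound n) \<le> (ln (real n))\<^sup>2"
    unfolding real_jump_bound by (rule of_int_floor_le)
  ultimately show ?thesis by linarith
qed

lemma tendsto_prefix_len_tail:
  assumes p: "0 < p" "p < 1"
  shows "(\<lambda>n. 2 * real (prefix_len n) * p ^ Suc (jump_bound n)) \<longlonglongrightarrow> 0"
proof -
  define c where "c = - ln p"
  have c: "0 < c" using p by (simp add: c_def)
  have bound: "2 * real (prefix_len n) * p ^ Suc (jump_bound n) \<le> 2 * (real n * exp (- c * (ln (real n))\<^sup>2))"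
    for n
  proof -
    have "(ln (real n))\<^sup>2 \<le> real (Suc (jump_bound n))"
      unfolding of_nat_Suc real_jump_bound by linarith
    then have "real (Suc (jump_bound n)) * ln p \<le> - c * (ln (real n))\<^sup>2"
      using p unfolding c_def by (simp add: mult.commute mult_right_mono_neg)
    moreover have "p ^ Suc (jump_bound n) = exp (real (Suc (jump_bound n)) * ln p)"
      using p by (subst exp_of_nat_mult) simp
    ultimately have "p ^ Suc (jump_bound n) \<le> exp (- c * (ln (real n))\<^sup>2)" by simp
    then have "real (prefix_len n) * p ^ Suc (jump_bound n) \<le> real n * exp (- c * (ln (real n))\<^sup>2)"
      using prefix_len_le[of n] p by (intro mult_mono) auto
    then show ?thesis by simp
  qed
  have "(\<lambda>n. real n * exp (- c * (ln (real n))\<^sup>2)) \<longlonglongrightarrow> 0"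
    using c by real_asymp
  then have lim: "(\<lambda>n. 2 * (real n * exp (- c * (ln (real n))\<^sup>2))) \<longlonglongrightarrow> 0"
    by (rule tendsto_mult_right_zero)
  show ?thesis
    by (rule tendsto_sandwich[OF _ _ tendsto_const lim]) (use bound p in \<open>auto intro!: always_eventually\<close>)
qed

definition bounded_jumps :: "nat \<Rightarrow> nat \<Rightarrow> (nat \<Rightarrow> nat) set" where
  "bounded_jumps m D = {Z. \<forall>k\<in>{1..m}. Z k - 1 \<le> D}"

lemma bounded_jumps_sets: "bounded_jumps m D \<in> sets (geom_seq p)"
proof -
  have "bounded_jumps m D = {Z \<in> space (geom_seq p). \<forall>k\<in>{1..m}. Z k \<in> {z. z - 1 \<le> D}}"
    unfolding bounded_jumps_def by simp
  also have "\<dots> \<in> sets (geom_seq p)" unfolding geom_seq_def by measurable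
  finally show ?thesis .
qed

lemma measure_bounded_jumps_pair:
  assumes p: "0 < p" "p < 1"
  shows "measure (geom_seq p \<Otimes>\<^sub>M geom_seq p) (bounded_jumps m D \<times> bounded_jumps m D) = (1 - p ^ Suc D) ^ (2 * m)"
proof -
  have nonneg: "0 \<le> 1 - p ^ Suc D" using power_le_one[of p "Suc D"] p by linarith
  have "emeasure (geom_seq p) (bounded_jumps m D) = (\<Prod>k\<in>{1..m}. emeasure (measure_pmf (geom1 p)) {z. z - 1 \<le> D})"
    using emeasure_geom_seq_cylinder[of "{1..m}" p "\<lambda>_. {z. z - 1 \<le> D}"] unfolding bounded_jumps_def by simp
  also have "\<dots> = ennreal ((1 - p ^ Suc D) ^ m)"
    using emeasure_geom1_le[OF p] nonneg by (simp add: prod_ennreal ennreal_power)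
  finally have "emeasure (geom_seq p \<Otimes>\<^sub>M geom_seq p) (bounded_jumps m D \<times> bounded_jumps m D)
      = ennreal ((1 - p ^ Suc D) ^ m) * ennreal ((1 - p ^ Suc D) ^ m)"
    using sigma_finite_measure.emeasure_pair_measure_Times[OF
        prob_space_imp_sigma_finite[OF prob_space_geom_seq] bounded_jumps_sets bounded_jumps_sets]
    by simp
  then show ?thesis
    using nonneg by (simp add: measure_def ennreal_mult''[symmetric] power_add mult_2 del: ennreal_mult'')
qed

definition coupling_map ::
  "nat \<Rightarrow> (nat \<Rightarrow> nat) \<times> (nat \<Rightarrow> nat) \<Rightarrow> (nat \<Rightarrow> nat) \<times> (nat \<Rightarrow> nat) \<times> (nat \<Rightarrow> nat)" where
  "coupling_map n x = (coupled_perm n (prefix_len n) (fst x) (snd x), mallows_inj (fst x), mallows_inj (snd x))"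

definition mallows_coupling :: "real \<Rightarrow> nat \<Rightarrow> ((nat \<Rightarrow> nat) \<times> (nat \<Rightarrow> nat) \<times> (nat \<Rightarrow> nat)) measure" where
  "mallows_coupling q n =
     distr (geom_seq (1 / q) \<Otimes>\<^sub>M geom_seq (1 / q)) (FunM \<Otimes>\<^sub>M FunM \<Otimes>\<^sub>M FunM) (coupling_map n)"

lemma measurable_coupling_map:
  "coupling_map n \<in> geom_seq p \<Otimes>\<^sub>M geom_seq p \<rightarrow>\<^sub>M FunM \<Otimes>\<^sub>M FunM \<Otimes>\<^sub>M FunM"
  unfolding coupling_map_def
  by (intro measurable_Pair measurable_coupled_perm[OF prefix_len_le]
      measurable_compose[OF measurable_fst measurable_mallows_inj]
      measurable_compose[OF measurable_snd measurable_mallows_inj])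

lemma prob_space_mallows_coupling: "prob_space (mallows_coupling q n)"
  unfolding mallows_coupling_def
  by (intro prob_space.prob_space_distr prob_space_pair prob_space_geom_seq measurable_coupling_map)

lemma is_coupling_mallows_coupling:
  assumes "1 < q"
  shows "is_coupling n q (mallows_coupling q n)"
proof -
  let ?G = "geom_seq (1 / q)"
  have "distr (mallows_coupling q n) FunM fst = distr (?G \<Otimes>\<^sub>M ?G) FunM (fst \<circ> coupling_map n)"
    unfolding mallows_coupling_def by (rule distr_distr[OF measurable_fst measurable_coupling_map])
  also have "\<dots> = distr (measure_pmf (mallows_fin n q)) FunM (\<lambda>x. x)"
    using distr_coupled_perm[OF assms prefix_len_le] by (simp add: o_def coupling_map_def)
  finally have fst_law: "distr (mallows_coupling q n) FunM fst = distr (measure_pmf (mallows_fin n q)) FunM (\<lambda>x. x)" .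
  have "distr (mallows_coupling q n) (FunM \<Otimes>\<^sub>M FunM) snd
      = distr (?G \<Otimes>\<^sub>M ?G) (FunM \<Otimes>\<^sub>M FunM) (\<lambda>(Z, Z'). (mallows_inj Z, mallows_inj Z'))"
    unfolding mallows_coupling_def
    by (simp add: distr_distr[OF measurable_snd measurable_coupling_map] o_def coupling_map_def split_beta')
  also have "\<dots> = mallows_N (1 / q) \<Otimes>\<^sub>M mallows_N (1 / q)"
    unfolding mallows_N_eq_distr_geom_seq
    by (intro pair_measure_distr[symmetric] measurable_mallows_inj prob_space_imp_sigma_finite
        prob_space.prob_space_distr prob_space_geom_seq)
  finally show ?thesis
    unfolding is_coupling_def using fst_law prob_space_mallows_coupling by (simp add: mallows_coupling_def)
qed

lemma pred_eq_count_space [measurable (raw)]: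
  fixes f g :: "'a \<Rightarrow> nat"
  assumes f: "f \<in> M \<rightarrow>\<^sub>M count_space UNIV" and g: "g \<in> M \<rightarrow>\<^sub>M count_space UNIV"
  shows "Measurable.pred M (\<lambda>x. f x = g x)"
proof -
  have "(\<lambda>x. (\<lambda>a x. a = g x) (f x) x) \<in> M \<rightarrow>\<^sub>M count_space UNIV"
    by (rule measurable_compose_countable[OF _ f]) (rule pred_count_space_const2[OF g])
  then show ?thesis unfolding Measurable.pred_def by simp
qed

lemma good_event_sets: "good_event n \<in> sets (FunM \<Otimes>\<^sub>M FunM \<Otimes>\<^sub>M FunM)"
proof -
  define I where "I = {i::nat. 1 \<le> i \<and> int i \<le> \<lfloor>real n / 2 - (ln (real n))\<^sup>2\<rfloor>}"
  have "I \<subseteq> {1..prefix_len n}" using le_prefix_len_iff by (auto simp: I_def)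
  then have "finite I" by (rule finite_subset) simp
  have "good_event n = {x \<in> space (FunM \<Otimes>\<^sub>M FunM \<Otimes>\<^sub>M FunM).
      \<forall>i\<in>I. n + 1 - fst x i = fst (snd x) i \<and> fst x (n + 1 - i) = snd (snd x) i}"
    unfolding good_event_def I_def by (auto simp: space_pair_measure)
  also have "\<dots> \<in> sets (FunM \<Otimes>\<^sub>M FunM \<Otimes>\<^sub>M FunM)"
    unfolding FunM_def using \<open>finite I\<close> by measurable
  finally show ?thesis .
qed

lemma coupling_map_in_good_event:
  assumes "x \<in> bounded_jumps (prefix_len n) (jump_bound n) \<times> bounded_jumps (prefix_len n) (jump_bound n)"
  shows "coupling_map n x \<in> good_event n"
proof -
  obtain Z Z' where x: "x = (Z, Z')" by (cases x)
  have ZD: "\<And>k. k \<in> {1..prefix_len n} \<Longrightarrow> Z k - 1 \<le> jump_bound n"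
    and ZD': "\<And>k. k \<in> {1..prefix_len n} \<Longrightarrow> Z' k - 1 \<le> jump_bound n"
    using assms unfolding x bounded_jumps_def by auto
  have "n + 1 - coupled_perm n (prefix_len n) Z Z' i = mallows_inj Z i \<and>
      coupled_perm n (prefix_len n) Z Z' (n + 1 - i) = mallows_inj Z' i"
    if i: "i \<in> {1..prefix_len n}" for i
  proof -
    have nm: "2 * prefix_len n + 2 * jump_bound n \<le> n" using i prefix_len_jump_bound by auto
    show ?thesis
      using mallows_inj_eq_reflect_coupled_perm[where Z = Z and Z' = Z', OF nm ZD i]
        mallows_inj_eq_coupled_perm_reflect[where Z = Z and Z' = Z', OF nm ZD ZD' i] by simp
  qed
  then show ?thesis
    unfolding good_event_def coupling_map_def x using le_prefix_len_iff by auto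
qed

lemma measure_good_event_ge:
  assumes q: "1 < q"
  shows "1 - 2 * real (prefix_len n) * (1 / q) ^ Suc (jump_bound n) \<le> measure (mallows_coupling q n) (good_event n)"
proof -
  let ?M = "geom_seq (1 / q) \<Otimes>\<^sub>M geom_seq (1 / q)"
    and ?B = "bounded_jumps (prefix_len n) (jump_bound n)" and ?t = "(1 / q) ^ Suc (jump_bound n)"
  interpret M: prob_space ?M by (intro prob_space_pair prob_space_geom_seq)
  have t: "0 \<le> ?t" "?t \<le> 1" using q power_le_one[of "1 / q" "Suc (jump_bound n)"] by auto
  have "1 - 2 * real (prefix_len n) * ?t \<le> (1 - ?t) ^ (2 * prefix_len n)"
    using Bernoulli_inequality[of "- ?t" "2 * prefix_len n"] t by simp
  also have "\<dots> = measure ?M (?B \<times> ?B)"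
    using q by (intro measure_bounded_jumps_pair[symmetric]) auto
  also have "\<dots> \<le> measure ?M (coupling_map n -` good_event n \<inter> space ?M)"
    using coupling_map_in_good_event measurable_sets[OF measurable_coupling_map good_event_sets]
    by (intro M.finite_measure_mono) (auto simp: space_pair_measure)
  also have "\<dots> = measure (mallows_coupling q n) (good_event n)"
    unfolding mallows_coupling_def by (rule measure_distr[symmetric, OF measurable_coupling_map good_event_sets])
  finally show ?thesis .
qed

theorem corollary4p2:
  fixes q :: real
  assumes "q > 1"
  shows "\<exists>C. (\<forall>n. is_coupling n q (C n)) \<and>
             (\<lambda>n. measure (C n) (good_event n)) \<longlonglongrightarrow> 1"
proof (intro exI conjI allI)
  show "is_coupling n q (mallows_coupling q n)" for n
    using is_coupling_mallows_coupling[OF assms] .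
  have p: "0 < 1 / q" "1 / q < 1" using assms by auto
  have "\<forall>\<^sub>F n in sequentially. 1 - 2 * real (prefix_len n) * (1 / q) ^ Suc (jump_bound n)
      \<le> measure (mallows_coupling q n) (good_event n)"
    using measure_good_event_ge[OF assms] by (simp add: always_eventually)
  moreover have "\<forall>\<^sub>F n in sequentially. measure (mallows_coupling q n) (good_event n) \<le> 1"
    using prob_space.prob_le_1[OF prob_space_mallows_coupling] by (simp add: always_eventually)
  moreover have "(\<lambda>n. 1 - 2 * real (prefix_len n) * (1 / q) ^ Suc (jump_bound n)) \<longlonglongrightarrow> 1"
    using tendsto_diff[OF tendsto_const tendsto_prefix_len_tail[OF p]] by simp
  ultimately show "(\<lambda>n. measure (mallows_coupling q n) (good_event n)) \<longlonglongrightarrow> 1"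
    using tendsto_const by (rule tendsto_sandwich)
qed

end
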